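(* Let $M$ be a $*$-left Ehresmann monoid and $H\subseteq M$ a proper atomic subset. Then for every $h\in H$, $h\,\sigma\,1$ if and only if $h\in E$.
   Context: A $*$-left Ehresmann monoid is a monoid $M$ with unary operations $+,*$ such that $x^+x=x$, $(x^+y^+)^+=x^+y^+$, $x^+y^+=y^+x^+$, $(xy)^+=(xy^+)^+$, $xx^*=x$, $(x^* )^*=x^*$, $x^*y^*=y^*x^*$, $(xy^* )^*y^*=(xy^* )^*$, $(x^* )^+=x^*$, $(x^+)^*=x^+$. Its semilattice of projections is $E=\{a^+\}=\{a^*\}$; $\sigma$ is the least monoid congruence on $M$ containing $E\times E$. $H\subseteq M$ is atomic if: (H1) $E\subseteq H$; (H2) $h\in H,e\in E$ imply $he\in H$ and $(he)^*=h^*e$; (H3) if $h\in H$, $k\in H\setminus E$, $h^*\ge k^+$ then $hk\in H$ and $(hk)^*=k^*$; (H4) every $m\in M$ is $\sigma$-related to some $h\in H$; (H5) if $h,k,w\in H$, $hk\,\sigma\,w$ and $k^*=w^*$, then some $u\in H$ has $u\,\sigma\,h$ and $u^*\ge k^+$. $H$ is proper if for all $h,k\in H$: ($h^*=k^*$ and $h\,\sigma\,k$) iff $h=k$. *)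

theory Defs
  imports Main
begin

text \<open>A star-left Ehresmann monoid: a monoid (type class monoid_mult, the whole
type is the monoid) with unary operations pl (x^+) and st (x^star).\<close>

definition star_left_ehresmann :: "('a::monoid_mult \<Rightarrow> 'a) \<Rightarrow> ('a \<Rightarrow> 'a) \<Rightarrow> bool" where
  "star_left_ehresmann pl st \<longleftrightarrow>
     (\<forall>x. pl x * x = x) \<and>
     (\<forall>x y. pl (pl x * pl y) = pl x * pl y) \<and>
     (\<forall>x y. pl x * pl y = pl y * pl x) \<and>
     (\<forall>x y. pl (x * y) = pl (x * pl y)) \<and>
     (\<forall>x. x * st x = x) \<and>
     (\<forall>x. st (st x) = st x) \<and>
     (\<forall>x y. st x * st y = st y * st x) \<and>
     (\<forall>x y. st (x * st y) * st y = st (x * st y)) \<and>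
     (\<forall>x. pl (st x) = st x) \<and>
     (\<forall>x. st (pl x) = pl x)"

definition projections :: "('a \<Rightarrow> 'a) \<Rightarrow> 'a set" where
  "projections pl = range pl"

definition proj_le :: "'a::monoid_mult \<Rightarrow> 'a \<Rightarrow> bool" where
  "proj_le e f \<longleftrightarrow> e = e * f"

definition monoid_congruence :: "('a::monoid_mult \<times> 'a) set \<Rightarrow> bool" where
  "monoid_congruence R \<longleftrightarrow> equiv UNIV R \<and>
     (\<forall>a b c d. (a, b) \<in> R \<and> (c, d) \<in> R \<longrightarrow> (a * c, b * d) \<in> R)"

definition sigma_cong :: "('a::monoid_mult \<Rightarrow> 'a) \<Rightarrow> ('a \<times> 'a) set" where
  "sigma_cong pl = \<Inter> {R. monoid_congruence R \<and> projections pl \<times> projections pl \<subseteq> R}"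

definition atomic_subset :: "('a::monoid_mult \<Rightarrow> 'a) \<Rightarrow> ('a \<Rightarrow> 'a) \<Rightarrow> 'a set \<Rightarrow> bool" where
  "atomic_subset pl st H \<longleftrightarrow>
     projections pl \<subseteq> H \<and>
     (\<forall>h\<in>H. \<forall>e\<in>projections pl. h * e \<in> H \<and> st (h * e) = st h * e) \<and>
     (\<forall>h\<in>H. \<forall>k\<in>H - projections pl. proj_le (pl k) (st h) \<longrightarrow>
         h * k \<in> H \<and> st (h * k) = st k) \<and>
     (\<forall>m. \<exists>h\<in>H. (m, h) \<in> sigma_cong pl) \<and>
     (\<forall>h\<in>H. \<forall>k\<in>H. \<forall>w\<in>H. (h * k, w) \<in> sigma_cong pl \<and> st k = st w \<longrightarrow>
         (\<exists>u\<in>H. (u, h) \<in> sigma_cong pl \<and> proj_le (pl k) (st u)))"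

definition proper_subset :: "('a::monoid_mult \<Rightarrow> 'a) \<Rightarrow> ('a \<Rightarrow> 'a) \<Rightarrow> 'a set \<Rightarrow> bool" where
  "proper_subset pl st H \<longleftrightarrow>
     (\<forall>h\<in>H. \<forall>k\<in>H. (st h = st k \<and> (h, k) \<in> sigma_cong pl) \<longleftrightarrow> h = k)"

end

theory Submission
  imports Defs
begin

text \<open>If \<open>h \<sigma> 1\<close> then \<open>h \<sigma> h\<^sup>*\<close>, since \<open>1 = 1\<^sup>+\<close> and \<open>h\<^sup>*\<close> both lie in \<open>E\<close>. The projection
  \<open>h\<^sup>*\<close> belongs to \<open>H\<close> and is its own star, so properness of \<open>H\<close> forces \<open>h = h\<^sup>*\<close>.
  Conversely every projection is \<open>\<sigma>\<close>-related to the projection \<open>1\<close>.\<close>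

lemma star_left_ehresmann_pl_one:
  assumes "star_left_ehresmann pl st"
  shows "pl 1 = 1"
proof -
  have "pl 1 * 1 = 1" using assms unfolding star_left_ehresmann_def by blast
  then show ?thesis by simp
qed

lemma star_left_ehresmann_one_in_projections:
  assumes "star_left_ehresmann pl st"
  shows "1 \<in> projections pl"
  unfolding projections_def using star_left_ehresmann_pl_one[OF assms] by (metis rangeI)

lemma star_left_ehresmann_st_in_projections:
  assumes "star_left_ehresmann pl st"
  shows "st x \<in> projections pl"
proof -
  have "pl (st x) = st x" using assms unfolding star_left_ehresmann_def by blast
  then show ?thesis unfolding projections_def by (metis rangeI)
qed

lemma star_left_ehresmann_st_st:
  "star_left_ehresmann pl st \<Longrightarrow> st (st x) = st x"
  unfolding star_left_ehresmann_def by blast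

lemma sigma_cong_projections:
  "e \<in> projections pl \<Longrightarrow> f \<in> projections pl \<Longrightarrow> (e, f) \<in> sigma_cong pl"
  unfolding sigma_cong_def by blast

lemma trans_sigma_cong: "trans (sigma_cong pl)"
proof (rule transI)
  fix a b c assume ab: "(a, b) \<in> sigma_cong pl" and bc: "(b, c) \<in> sigma_cong pl"
  show "(a, c) \<in> sigma_cong pl"
    unfolding sigma_cong_def
  proof (intro InterI, clarify)
    fix R assume "monoid_congruence R" "projections pl \<times> projections pl \<subseteq> R"
    with ab bc have "(a, b) \<in> R" "(b, c) \<in> R" "trans R"
      unfolding sigma_cong_def monoid_congruence_def equiv_def by blast+
    then show "(a, c) \<in> R" by (blast dest: transD)
  qed
qed

lemma proper_subset_st_eq_self_if_sigma_cong:
  assumes "star_left_ehresmann pl st"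
    and "projections pl \<subseteq> H"
    and "proper_subset pl st H"
    and "h \<in> H"
    and "(h, st h) \<in> sigma_cong pl"
  shows "st h = h"
proof -
  have "st h \<in> H"
    using assms(1,2) star_left_ehresmann_st_in_projections by blast
  with assms(3,4) have "(st h = st (st h) \<and> (h, st h) \<in> sigma_cong pl) \<longleftrightarrow> h = st h"
    unfolding proper_subset_def by blast
  moreover have "st h = st (st h)"
    using assms(1) by (rule star_left_ehresmann_st_st[symmetric])
  ultimately show ?thesis
    using assms(5) by metis
qed

theorem mainTheorem7:
  fixes pl st :: "'a::monoid_mult \<Rightarrow> 'a" and H :: "'a set"
  assumes "star_left_ehresmann pl st"
    and "atomic_subset pl st H"
    and "proper_subset pl st H"
    and "h \<in> H"
  shows "(h, 1) \<in> sigma_cong pl \<longleftrightarrow> h \<in> projections pl"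
proof
  have one: "1 \<in> projections pl"
    using assms(1) by (rule star_left_ehresmann_one_in_projections)
  have st_h: "st h \<in> projections pl"
    using assms(1) by (rule star_left_ehresmann_st_in_projections)
  show "(h, 1) \<in> sigma_cong pl" if "h \<in> projections pl"
    using that one by (rule sigma_cong_projections)
  have E_sub_H: "projections pl \<subseteq> H"
    using assms(2) unfolding atomic_subset_def by blast
  assume "(h, 1) \<in> sigma_cong pl"
  moreover have "(1, st h) \<in> sigma_cong pl"
    using one st_h by (rule sigma_cong_projections)
  ultimately have "(h, st h) \<in> sigma_cong pl"
    by (rule transD[OF trans_sigma_cong])
  with assms(1) E_sub_H assms(3,4) have "st h = h"
    by (rule proper_subset_st_eq_self_if_sigma_cong)
  with st_h show "h \<in> projections pl" by simp
qed

end
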